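(* Under the hypotheses of Theorem 2 (i.e. $\alpha_x,\alpha_y,\alpha_z>1$, $\alpha=\gcd(\alpha_x,\alpha_y,\alpha_z)$, $\beta_y=\alpha_y/\alpha$ odd), for each $i\in\{0,1,2,3\}$ the half-plane operators $X|_{\mathcal D_x^{g_i}}$ and $Z|_{\mathcal D_z^{g_i}}$ commute with every stabilizer generator $S_s$, and, up to multiplication by an element of the stabilizer group $\mathcal S$, $$X|_{\mathcal D_x^{g_i}}=\prod_{j=0}^{\alpha-1}X_{Li}^j,\qquad Z|_{\mathcal D_z^{g_i}}=\prod_{j=0}^{\alpha-1}Z_{Li}^j.$$
   Context: Chamon model: for positive integers $\alpha_x,\alpha_y,\alpha_z$ let $\mathcal A=\mathbb Z_{2\alpha_x}\times\mathbb Z_{2\alpha_y}\times\mathbb Z_{2\alpha_z}$ and $\mathcal D=\{(x,y,z)\in\mathcal A: x+y+z \text{ even}\}$, one qubit per point of $\mathcal D$. With $e_x^{\pm}=(\pm1,0,0)$, $e_y^{\pm}=(0,\pm1,0)$, $e_z^{\pm}=(0,0,\pm1)$, for $s\in\mathcal A\setminus\mathcal D$ the stabilizer generator is $S_s=X_{s+e_x^+}X_{s+e_x^-}Y_{s+e_y^+}Y_{s+e_y^-}Z_{s+e_z^+}Z_{s+e_z^-}$ (single-qubit Paulis, $Y=ZX$); $\mathcal S$ is the group they generate. For $\mathcal D'\subseteq\mathcal D$, $X|_{\mathcal D'}=\prod_{d\in\mathcal D'}X_d$, $Z|_{\mathcal D'}=\prod_{d\in\mathcal D'}Z_d$. Let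 $g_0=(0,0,0)$, $g_1=(1,1,0)$, $g_2=(1,0,1)$, $g_3=(0,1,1)$; half-plane sets $\mathcal D_x^{g_i}=\{g_i+2\lambda e_z^{+}+2\lambda' e_y^{+}:\lambda,\lambda'\in\mathbb Z\}$, $\mathcal D_z^{g_i}=\{g_i+2\lambda e_x^{+}+2\lambda' e_y^{+}:\lambda,\lambda'\in\mathbb Z\}$. Write $\alpha_x=\beta_x\alpha,\alpha_y=\beta_y\alpha,\alpha_z=\beta_z\alpha$; $g_{i,j}=g_i+2je_y^{+}$, $\mu_i=(-1)^{\lfloor i/2\rfloor}$, $\nu_i=(-1)^{\lceil i/2\rceil\bmod 2}$; $\mathcal G_{i,j}^x=\{g_{i,j}+2\lambda\alpha e_y^{+}+2\lambda'\alpha e_z^{+}:0\le\lambda<\beta_y,0\le\lambda'<\beta_z\}$, $\mathcal G_{i,j}^z=\{g_{i,j}+2\lambda\alpha e_y^{+}+2\lambda'\alpha e_x^{+}:0\le\lambda<\beta_y,0\le\lambda'<\beta_x\}$, $\mathcal D_x^{i,j}=\{g+\lambda(\mu_i e_z^{+}+e_y^{+})+\lambda'(\mu_i e_z^{+}+e_y^{-}):0\le\lambda,\lambda'<\alpha,\ g\in\mathcal G_{i,j}^x\}$, $\mathcal D_z^{i,j}=\{g+\lambda(\nu_i e_x^{+}+e_y^{+})+\lambda'(\nu_i e_x^{+}+e_y^{-}):0\le\lambda,\lambda'<\alpha,\ g\in\mathcal G_{i,j}^z\}$; $X_{Li}^j=X|_{\mathcal D_x^{i,j}}$, $Z_{Li}^j=Z|_{\mathcal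 D_z^{i,j}}$ (coordinates modulo $2\alpha_x,2\alpha_y,2\alpha_z$). *)

theory Defs
  imports Main
begin

type_synonym pt = "int \<times> int \<times> int"

definition padd :: "pt \<Rightarrow> pt \<Rightarrow> pt" where
  "padd p q = (fst p + fst q, fst (snd p) + fst (snd q), snd (snd p) + snd (snd q))"

definition psc :: "int \<Rightarrow> pt \<Rightarrow> pt" where
  "psc c p = (c * fst p, c * fst (snd p), c * snd (snd p))"

definition exP :: pt where "exP = (1,0,0)"
definition exM :: pt where "exM = (-1,0,0)"
definition eyP :: pt where "eyP = (0,1,0)"
definition eyM :: pt where "eyM = (0,-1,0)"
definition ezP :: pt where "ezP = (0,0,1)"
definition ezM :: pt where "ezM = (0,0,-1)"

definition red :: "nat \<Rightarrow> nat \<Rightarrow> nat \<Rightarrow> pt \<Rightarrow> pt" where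
  "red ax ay az p = (fst p mod (2 * int ax), fst (snd p) mod (2 * int ay), snd (snd p) mod (2 * int az))"

definition Aset :: "nat \<Rightarrow> nat \<Rightarrow> nat \<Rightarrow> pt set" where
  "Aset ax ay az = {(x,y,z). 0 \<le> x \<and> x < 2 * int ax \<and> 0 \<le> y \<and> y < 2 * int ay
                          \<and> 0 \<le> z \<and> z < 2 * int az}"

definition Dset :: "nat \<Rightarrow> nat \<Rightarrow> nat \<Rightarrow> pt set" where
  "Dset ax ay az = {(x,y,z). (x,y,z) \<in> Aset ax ay az \<and> even (x + y + z)}"

text \<open>A record with ph = k, xs = a, zs = b represents the operator
  i^k * (prod over d in b of Z_d) * (prod over d in a of X_d); phases are kept mod 4.\<close>
record pauli =
  ph :: int
  xs :: "pt set"
  zs :: "pt set"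

definition symdiff :: "'a set \<Rightarrow> 'a set \<Rightarrow> 'a set" where
  "symdiff A B = (A - B) \<union> (B - A)"

text \<open>(Z^{z1} X^{x1})(Z^{z2} X^{x2}) = (-1)^{|x1 \<inter> z2|} Z^{z1+z2} X^{x1+x2}.\<close>
definition pmult :: "pauli \<Rightarrow> pauli \<Rightarrow> pauli" where
  "pmult P Q = \<lparr>ph = (ph P + ph Q + 2 * int (card (xs P \<inter> zs Q))) mod 4,
                xs = symdiff (xs P) (xs Q), zs = symdiff (zs P) (zs Q)\<rparr>"

definition pone :: pauli where "pone = \<lparr>ph = 0, xs = {}, zs = {}\<rparr>"

definition pcommute :: "pauli \<Rightarrow> pauli \<Rightarrow> bool" where
  "pcommute P Q \<longleftrightarrow> pmult P Q = pmult Q P"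

definition pprod :: "pauli list \<Rightarrow> pauli" where
  "pprod ps = foldr pmult ps pone"

definition Xq :: "pt \<Rightarrow> pauli" where "Xq d = \<lparr>ph = 0, xs = {d}, zs = {}\<rparr>"
definition Zq :: "pt \<Rightarrow> pauli" where "Zq d = \<lparr>ph = 0, xs = {}, zs = {d}\<rparr>"
definition Yq :: "pt \<Rightarrow> pauli" where "Yq d = pmult (Zq d) (Xq d)"

definition Xres :: "pt set \<Rightarrow> pauli" where "Xres D' = \<lparr>ph = 0, xs = D', zs = {}\<rparr>"
definition Zres :: "pt set \<Rightarrow> pauli" where "Zres D' = \<lparr>ph = 0, xs = {}, zs = D'\<rparr>"

definition Sgen :: "nat \<Rightarrow> nat \<Rightarrow> nat \<Rightarrow> pt \<Rightarrow> pauli" where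
  "Sgen ax ay az s = (let r = red ax ay az in
     pprod [Xq (r (padd s exP)), Xq (r (padd s exM)),
            Yq (r (padd s eyP)), Yq (r (padd s eyM)),
            Zq (r (padd s ezP)), Zq (r (padd s ezM))])"

text \<open>The group generated by the S_s, s in A \ D (every Pauli has finite order,
  so the generated submonoid is the generated group).\<close>
inductive_set stab :: "nat \<Rightarrow> nat \<Rightarrow> nat \<Rightarrow> pauli set" for ax ay az where
  stab_one: "pone \<in> stab ax ay az"
| stab_mult: "s \<in> Aset ax ay az - Dset ax ay az \<Longrightarrow> P \<in> stab ax ay az
              \<Longrightarrow> pmult (Sgen ax ay az s) P \<in> stab ax ay az"

definition gpt :: "nat \<Rightarrow> pt" where
  "gpt i = (if i = 0 then (0,0,0) else if i = 1 then (1,1,0) else if i = 2 then (1,0,1) else (0,1,1))"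

definition DxHalf :: "nat \<Rightarrow> nat \<Rightarrow> nat \<Rightarrow> nat \<Rightarrow> pt set" where
  "DxHalf ax ay az i = red ax ay az ` {padd (gpt i) (padd (psc (2*l) ezP) (psc (2*l') eyP)) | l l'. True}"

definition DzHalf :: "nat \<Rightarrow> nat \<Rightarrow> nat \<Rightarrow> nat \<Rightarrow> pt set" where
  "DzHalf ax ay az i = red ax ay az ` {padd (gpt i) (padd (psc (2*l) exP) (psc (2*l') eyP)) | l l'. True}"

definition gal :: "nat \<Rightarrow> nat \<Rightarrow> nat \<Rightarrow> nat" where
  "gal ax ay az = gcd (gcd ax ay) az"

definition gij :: "nat \<Rightarrow> nat \<Rightarrow> pt" where
  "gij i j = padd (gpt i) (psc (2 * int j) eyP)"

definition mu :: "nat \<Rightarrow> int" where "mu i = (-1) ^ (i div 2)"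
definition nu :: "nat \<Rightarrow> int" where "nu i = (-1) ^ (((i + 1) div 2) mod 2)"

definition Gx :: "nat \<Rightarrow> nat \<Rightarrow> nat \<Rightarrow> nat \<Rightarrow> nat \<Rightarrow> pt set" where
  "Gx ax ay az i j = (let a = gal ax ay az in
     {padd (gij i j) (padd (psc (2 * int l * int a) eyP) (psc (2 * int l' * int a) ezP)) | l l'.
        l < ay div a \<and> l' < az div a})"

definition Gz :: "nat \<Rightarrow> nat \<Rightarrow> nat \<Rightarrow> nat \<Rightarrow> nat \<Rightarrow> pt set" where
  "Gz ax ay az i j = (let a = gal ax ay az in
     {padd (gij i j) (padd (psc (2 * int l * int a) eyP) (psc (2 * int l' * int a) exP)) | l l'.
        l < ay div a \<and> l' < ax div a})"

definition DxL :: "nat \<Rightarrow> nat \<Rightarrow> nat \<Rightarrow> nat \<Rightarrow> nat \<Rightarrow> pt set" where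
  "DxL ax ay az i j = (let a = gal ax ay az in red ax ay az `
     {padd g (padd (psc (int l) (padd (psc (mu i) ezP) eyP)) (psc (int l') (padd (psc (mu i) ezP) eyM))) | g l l'.
        l < a \<and> l' < a \<and> g \<in> Gx ax ay az i j})"

definition DzL :: "nat \<Rightarrow> nat \<Rightarrow> nat \<Rightarrow> nat \<Rightarrow> nat \<Rightarrow> pt set" where
  "DzL ax ay az i j = (let a = gal ax ay az in red ax ay az `
     {padd g (padd (psc (int l) (padd (psc (nu i) exP) eyP)) (psc (int l') (padd (psc (nu i) exP) eyM))) | g l l'.
        l < a \<and> l' < a \<and> g \<in> Gz ax ay az i j})"

definition XL :: "nat \<Rightarrow> nat \<Rightarrow> nat \<Rightarrow> nat \<Rightarrow> nat \<Rightarrow> pauli" where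
  "XL ax ay az i j = Xres (DxL ax ay az i j)"

definition ZL :: "nat \<Rightarrow> nat \<Rightarrow> nat \<Rightarrow> nat \<Rightarrow> nat \<Rightarrow> pauli" where
  "ZL ax ay az i j = Zres (DzL ax ay az i j)"

end

theory Submission
  imports Defs
begin

(* A half-plane set fixes one coordinate and prescribes the parities of the other two. The two
   neighbours of s along an axis differ by 2 in that coordinate, so they lie in the half-plane
   together or not at all; hence every generator overlaps the half-plane in an even number of
   qubits, on the side (X or Z) that matters, and the operators commute.

   For the product formula, a point lies in the symmetric difference of the sets D^{i,j}, j < \<alpha>,
   iff it lies in an odd number of them. Modulo 2\<alpha>, a point with the right fixed coordinate lies in
   D^{i,j} iff its two offsets from g_i are 2j + l1 - l2 and \<mu>_i (l1 + l2) for some l1, l2 < \<alpha>.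
   The second offset pins l1 + l2 down to a residue b, and then j is determined by l1; so the number
   of admissible j is the number of l1 < \<alpha> with 0 \<le> b - l1 < \<alpha>, which has the parity of b + 1,
   provided the two offsets have the same parity. Thus the count is odd iff both offsets are even,
   i.e. iff the point lies in the half-plane. *)

section \<open>Pauli operators supported on X or on Z only\<close>

lemma symdiff_empty [simp]: "symdiff {} A = A" "symdiff A {} = A"
  by (auto simp: symdiff_def)

lemma symdiff_assoc: "symdiff (symdiff A B) C = symdiff A (symdiff B C)"
  by (auto simp: symdiff_def)

lemma finite_symdiff: "finite A \<Longrightarrow> finite B \<Longrightarrow> finite (symdiff A B)"
  by (simp add: symdiff_def)

lemma mem_foldr_symdiff_iff:
  "distinct js \<Longrightarrow> x \<in> foldr (\<lambda>j. symdiff (F j)) js {} \<longleftrightarrow> odd (card {j \<in> set js. x \<in> F j})"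
proof (induction js)
  case (Cons j js)
  have "{k \<in> set (j # js). x \<in> F k} = (if x \<in> F j then insert j else id) {k \<in> set js. x \<in> F k}"
    by auto
  with Cons show ?case by (auto simp: symdiff_def)
qed simp

lemma even_card_Int_symdiff:
  assumes "finite A" "finite B" "even (card (H \<inter> A))" "even (card (H \<inter> B))"
  shows "even (card (H \<inter> symdiff A B))"
proof -
  have fin: "finite (H \<inter> A)" "finite (H \<inter> B)" using assms(1,2) by auto
  have "H \<inter> A \<union> H \<inter> B = H \<inter> symdiff A B \<union> H \<inter> A \<inter> B"
    "H \<inter> symdiff A B \<inter> (H \<inter> A \<inter> B) = {}" by (auto simp: symdiff_def)
  then have "card (H \<inter> A \<union> H \<inter> B) = card (H \<inter> symdiff A B) + card (H \<inter> A \<inter> B)"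
    using assms(1,2) by (simp add: card_Un_disjoint symdiff_def)
  moreover have "card (H \<inter> A \<union> H \<inter> B) + card (H \<inter> A \<inter> B) = card (H \<inter> A) + card (H \<inter> B)"
    using card_Un_Int[OF fin] by (simp add: Int_assoc Int_left_commute)
  ultimately show ?thesis using assms(3,4) by presburger
qed

lemma even_card_Int_pair: "(a \<in> H \<longleftrightarrow> b \<in> H) \<Longrightarrow> even (card (H \<inter> symdiff {a} {b}))"
  by (cases "a = b") (auto simp: symdiff_def Int_insert_left)

lemma even_card_Int_two_pairs:
  assumes "a \<in> H \<longleftrightarrow> b \<in> H" "c \<in> H \<longleftrightarrow> d \<in> H"
  shows "even (card (H \<inter> symdiff {a} (symdiff {b} (symdiff {c} {d}))))"
proof -
  have "even (card (H \<inter> symdiff {a} {b}))" "even (card (H \<inter> symdiff {c} {d}))"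
    using assms by (simp_all add: even_card_Int_pair)
  then show ?thesis
    using even_card_Int_symdiff[of "symdiff {a} {b}" "symdiff {c} {d}" H]
    by (simp add: finite_symdiff symdiff_assoc)
qed

lemma xs_pmult [simp]: "xs (pmult P Q) = symdiff (xs P) (xs Q)"
  and zs_pmult [simp]: "zs (pmult P Q) = symdiff (zs P) (zs Q)"
  by (simp_all add: pmult_def)

lemma pmult_Xres_pone: "pmult (Xres A) pone = Xres A"
  by (simp add: pmult_def Xres_def pone_def)

lemma pmult_Zres_pone: "pmult (Zres A) pone = Zres A"
  by (simp add: pmult_def Zres_def pone_def)

lemma pprod_map_Xres: "pprod (map (\<lambda>j. Xres (F j)) js) = Xres (foldr (\<lambda>j. symdiff (F j)) js {})"
  by (induction js) (simp_all add: pprod_def pone_def Xres_def pmult_def)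

lemma pprod_map_Zres: "pprod (map (\<lambda>j. Zres (F j)) js) = Zres (foldr (\<lambda>j. symdiff (F j)) js {})"
  by (induction js) (simp_all add: pprod_def pone_def Zres_def pmult_def)

lemma pcommute_XresI: "even (card (H \<inter> zs Q)) \<Longrightarrow> pcommute (Xres H) Q"
  by (auto simp: pcommute_def pmult_def Xres_def symdiff_def elim!: evenE)

lemma pcommute_ZresI: "even (card (H \<inter> xs Q)) \<Longrightarrow> pcommute (Zres H) Q"
  by (auto simp: pcommute_def pmult_def Zres_def symdiff_def Int_commute elim!: evenE)

lemma Sgen_xs: "xs (Sgen ax ay az s) = symdiff {red ax ay az (padd s exP)}
    (symdiff {red ax ay az (padd s exM)} (symdiff {red ax ay az (padd s eyP)} {red ax ay az (padd s eyM)}))"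
  and Sgen_zs: "zs (Sgen ax ay az s) = symdiff {red ax ay az (padd s eyP)}
    (symdiff {red ax ay az (padd s eyM)} (symdiff {red ax ay az (padd s ezP)} {red ax ay az (padd s ezM)}))"
  by (simp_all add: Sgen_def Let_def pprod_def Xq_def Yq_def Zq_def pone_def)

section \<open>Half-plane operators commute with the generators\<close>

lemma gpt_coords: "gpt i \<in> {0,1} \<times> {0,1} \<times> {0,1}"
  by (simp add: gpt_def)

lemma even_mod_double_iff: "even ((y::int) mod (2 * n)) \<longleftrightarrow> even y"
  by (metis dvd_mod_iff dvd_triv_left even_mod_2_iff mod_mod_cancel)

lemma red_in_Aset: "ax > 0 \<Longrightarrow> ay > 0 \<Longrightarrow> az > 0 \<Longrightarrow> red ax ay az p \<in> Aset ax ay az"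
  by (simp add: red_def Aset_def)

lemma mem_DxHalf_iff:
  assumes "ax > 0" "ay > 0" "az > 0" and g: "gpt i = (gx,gy,gz)"
  shows "(x,y,z) \<in> DxHalf ax ay az i \<longleftrightarrow>
     (x,y,z) \<in> Aset ax ay az \<and> x = gx \<and> even (y - gy) \<and> even (z - gz)"
proof -
  have gx: "gx mod (2 * int ax) = gx" using gpt_coords[of i] g assms(1) by auto
  then have "DxHalf ax ay az i = red ax ay az ` {(gx, gy + 2*l', gz + 2*l) | l l'. True}"
    using g by (simp add: DxHalf_def padd_def psc_def ezP_def eyP_def)
  also have "\<dots> = {(x,y,z). (x,y,z) \<in> Aset ax ay az \<and> x = gx \<and> even (y - gy) \<and> even (z - gz)}"
  proof (intro set_eqI iffI)
    fix p assume "p \<in> red ax ay az ` {(gx, gy + 2*l', gz + 2*l) | l l'. True}"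
    then show "p \<in> {(x,y,z). (x,y,z) \<in> Aset ax ay az \<and> x = gx \<and> even (y - gy) \<and> even (z - gz)}"
      using gx red_in_Aset[OF assms(1-3)] by (auto simp: red_def even_mod_double_iff)
  next
    fix p assume "p \<in> {(x,y,z). (x,y,z) \<in> Aset ax ay az \<and> x = gx \<and> even (y - gy) \<and> even (z - gz)}"
    then obtain y z where "p = (gx,y,z)" "p \<in> Aset ax ay az" "even (y - gy)" "even (z - gz)" by auto
    then have "p = red ax ay az (gx, gy + 2 * ((y - gy) div 2), gz + 2 * ((z - gz) div 2))"
      using gx by (simp add: red_def Aset_def)
    then show "p \<in> red ax ay az ` {(gx, gy + 2*l', gz + 2*l) | l l'. True}" by blast
  qed
  finally show ?thesis by simp
qed

lemma mem_DzHalf_iff: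
  assumes "ax > 0" "ay > 0" "az > 0" and g: "gpt i = (gx,gy,gz)"
  shows "(x,y,z) \<in> DzHalf ax ay az i \<longleftrightarrow>
     (x,y,z) \<in> Aset ax ay az \<and> z = gz \<and> even (x - gx) \<and> even (y - gy)"
proof -
  have gz: "gz mod (2 * int az) = gz" using gpt_coords[of i] g assms(3) by auto
  then have "DzHalf ax ay az i = red ax ay az ` {(gx + 2*l, gy + 2*l', gz) | l l'. True}"
    using g by (simp add: DzHalf_def padd_def psc_def exP_def eyP_def)
  also have "\<dots> = {(x,y,z). (x,y,z) \<in> Aset ax ay az \<and> z = gz \<and> even (x - gx) \<and> even (y - gy)}"
  proof (intro set_eqI iffI)
    fix p assume "p \<in> red ax ay az ` {(gx + 2*l, gy + 2*l', gz) | l l'. True}"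
    then show "p \<in> {(x,y,z). (x,y,z) \<in> Aset ax ay az \<and> z = gz \<and> even (x - gx) \<and> even (y - gy)}"
      using gz red_in_Aset[OF assms(1-3)] by (auto simp: red_def even_mod_double_iff)
  next
    fix p assume "p \<in> {(x,y,z). (x,y,z) \<in> Aset ax ay az \<and> z = gz \<and> even (x - gx) \<and> even (y - gy)}"
    then obtain x y where "p = (x,y,gz)" "p \<in> Aset ax ay az" "even (x - gx)" "even (y - gy)" by auto
    then have "p = red ax ay az (gx + 2 * ((x - gx) div 2), gy + 2 * ((y - gy) div 2), gz)"
      using gz by (simp add: red_def Aset_def)
    then show "p \<in> red ax ay az ` {(gx + 2*l, gy + 2*l', gz) | l l'. True}" by blast
  qed
  finally show ?thesis by simp
qed

lemma pcommute_DxHalf_Sgen: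
  assumes "ax > 0" "ay > 0" "az > 0"
  shows "pcommute (Xres (DxHalf ax ay az i)) (Sgen ax ay az s)"
proof (rule pcommute_XresI)
  obtain gx gy gz where g: "gpt i = (gx,gy,gz)" by (cases "gpt i")
  obtain s1 s2 s3 where s: "s = (s1,s2,s3)" by (cases s)
  have mem: "red ax ay az (x,y,z) \<in> DxHalf ax ay az i \<longleftrightarrow>
      x mod (2 * int ax) = gx \<and> even (y - gy) \<and> even (z - gz)" for x y z
    using mem_DxHalf_iff[OF assms g] red_in_Aset[OF assms, of "(x,y,z)"]
    by (simp add: red_def even_mod_double_iff)
  show "even (card (DxHalf ax ay az i \<inter> zs (Sgen ax ay az s)))"
    unfolding Sgen_zs s
    by (rule even_card_Int_two_pairs) (simp_all add: padd_def eyP_def eyM_def ezP_def ezM_def mem)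
qed

lemma pcommute_DzHalf_Sgen:
  assumes "ax > 0" "ay > 0" "az > 0"
  shows "pcommute (Zres (DzHalf ax ay az i)) (Sgen ax ay az s)"
proof (rule pcommute_ZresI)
  obtain gx gy gz where g: "gpt i = (gx,gy,gz)" by (cases "gpt i")
  obtain s1 s2 s3 where s: "s = (s1,s2,s3)" by (cases s)
  have mem: "red ax ay az (x,y,z) \<in> DzHalf ax ay az i \<longleftrightarrow>
      z mod (2 * int az) = gz \<and> even (x - gx) \<and> even (y - gy)" for x y z
    using mem_DzHalf_iff[OF assms g] red_in_Aset[OF assms, of "(x,y,z)"]
    by (simp add: red_def even_mod_double_iff)
  show "even (card (DzHalf ax ay az i \<inter> xs (Sgen ax ay az s)))"
    unfolding Sgen_xs s
    by (rule even_card_Int_two_pairs) (simp_all add: padd_def exP_def exM_def eyP_def eyM_def mem)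
qed

section \<open>Counting residues\<close>

lemma ex_lattice_mod_iff:
  fixes a n :: nat and c t :: int
  assumes "a dvd n" "n > 0"
  shows "(\<exists>m < n div a. t = (c + 2 * int m * int a) mod (2 * int n)) \<longleftrightarrow>
    0 \<le> t \<and> t < 2 * int n \<and> 2 * int a dvd t - c"
proof
  assume "\<exists>m < n div a. t = (c + 2 * int m * int a) mod (2 * int n)"
  then obtain m where t: "t = (c + 2 * int m * int a) mod (2 * int n)" by blast
  have "2 * int a dvd 2 * int n" using assms(1) by simp
  then have "t mod (2 * int a) = (c + 2 * int a * int m) mod (2 * int a)"
    unfolding t by (simp add: mod_mod_cancel mult.commute mult.left_commute)
  then have "2 * int a dvd t - c" by (simp add: mod_eq_dvd_iff)
  then show "0 \<le> t \<and> t < 2 * int n \<and> 2 * int a dvd t - c" using t assms(2) by simp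
next
  obtain \<beta> where n: "n = a * \<beta>" using assms(1) by blast
  then have \<beta>: "\<beta> > 0" "n div a = \<beta>" using assms(2) by auto
  assume "0 \<le> t \<and> t < 2 * int n \<and> 2 * int a dvd t - c"
  then obtain k where t: "0 \<le> t" "t < 2 * int n" "t - c = 2 * int a * k" by blast
  define m where "m = nat (k mod int \<beta>)"
  have "int m = k - int \<beta> * (k div int \<beta>)"
    using \<beta> unfolding m_def by (simp add: minus_mult_div_eq_mod)
  then have "(c + 2 * int m * int a) mod (2 * int n) = (t - 2 * int n * (k div int \<beta>)) mod (2 * int n)"
    using t(3) unfolding n of_nat_mult by algebra
  also have "\<dots> = t mod (2 * int n)" by (simp add: mod_eq_dvd_iff)
  finally have "t = (c + 2 * int m * int a) mod (2 * int n)" using t(1,2) by simp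
  moreover have "m < n div a" using \<beta> unfolding m_def by (simp add: nat_less_iff)
  ultimately show "\<exists>m < n div a. t = (c + 2 * int m * int a) mod (2 * int n)" by blast
qed

lemma dvd_diff_unit_mult_iff:
  fixes z s \<mu> :: int and n :: nat
  assumes "\<mu> * \<mu> = 1" "0 \<le> s" "s < int n"
  shows "int n dvd z - \<mu> * s \<longleftrightarrow> s = (\<mu> * z) mod int n"
proof -
  have "z - \<mu> * s = \<mu> * (\<mu> * z - s)" "\<mu> * z - s = \<mu> * (z - \<mu> * s)"
    using assms(1) by (simp_all add: algebra_simps)
  then have "int n dvd z - \<mu> * s \<longleftrightarrow> int n dvd \<mu> * z - s"
    by (metis dvd_mult)
  also have "\<dots> \<longleftrightarrow> s = (\<mu> * z) mod int n"
    using assms(2,3) by (auto simp: mod_eq_dvd_iff[symmetric])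
  finally show ?thesis .
qed

lemma odd_card_window_iff:
  fixes a :: nat and b :: int
  assumes "0 \<le> b" "b < 2 * int a"
  shows "odd (card {l. l < a \<and> int l \<le> b \<and> b < int l + int a}) \<longleftrightarrow> even b"
proof (cases "b < int a")
  case True
  then have "{l. l < a \<and> int l \<le> b \<and> b < int l + int a} = {..nat b}" using assms by auto
  then show ?thesis using assms(1) by (simp add: even_nat_iff)
next
  case False
  then have "{l. l < a \<and> int l \<le> b \<and> b < int l + int a} = {nat (b - int a + 1)..<a}" by auto
  moreover have "int (card {nat (b - int a + 1)..<a}) = 2 * int a - 1 - b" using False assms by simp
  ultimately have "int (card {l. l < a \<and> int l \<le> b \<and> b < int l + int a}) = 2 * int a - 1 - b"
    by simp
  then show ?thesis by presburger
qed

lemma odd_card_window_cover_iff: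
  fixes a :: nat and b y :: int
  assumes a: "a > 0" and b: "0 \<le> b" "b < 2 * int a"
  defines "L \<equiv> {l. l < a \<and> int l \<le> b \<and> b < int l + int a}"
  shows "odd (card {j. j < a \<and> (\<exists>l\<in>L. 2 * int a dvd y + b - 2 * int j - 2 * int l)})
    \<longleftrightarrow> even y \<and> even b"
    (is "odd (card ?J) \<longleftrightarrow> _")
proof (cases "even (y + b)")
  case False
  then have "?J = {}" by (auto dest: dvd_mult_left)
  moreover have "\<not> (even y \<and> even b)" using False by auto
  ultimately show ?thesis by (simp only: card.empty) simp
next
  case True
  then obtain c where c: "y + b = 2 * c" by blast
  define f where "f l = nat ((c - int l) mod int a)" for l
  have f: "int (f l) = (c - int l) mod int a" for l using a by (simp add: f_def)
  have dvd_iff: "2 * int a dvd y + b - 2 * int j - 2 * int l \<longleftrightarrow> j = f l" if "j < a" for j l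
  proof -
    have e: "y + b - 2 * int j - 2 * int l = 2 * ((c - int l) - int j)" using c by simp
    have "2 * int a dvd y + b - 2 * int j - 2 * int l \<longleftrightarrow> int a dvd (c - int l) - int j"
      unfolding e by (rule dvd_times_left_cancel_iff) simp
    also have "\<dots> \<longleftrightarrow> (c - int l) mod int a = int j" using that by (simp add: mod_eq_dvd_iff[symmetric])
    finally show ?thesis using f[of l] by linarith
  qed
  have "?J = f ` L"
  proof
    show "?J \<subseteq> f ` L" using dvd_iff by blast
    have "int (f l) < int a" for l unfolding f using a by simp
    then have "f l < a" for l by simp
    then show "f ` L \<subseteq> ?J" using dvd_iff by blast
  qed
  moreover have "inj_on f L"
  proof
    fix l l' assume "l \<in> L" "l' \<in> L" "f l = f l'"
    then have "int a dvd int l - int l'" "l < a" "l' < a"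
      using f[of l] f[of l'] unfolding L_def by (auto simp: mod_eq_dvd_iff)
    then show "l = l'"
      using dvd_imp_le_int[of "int l - int l'" "int a"] by (cases "l = l'") auto
  qed
  ultimately have "card ?J = card L" by (simp add: card_image)
  then show ?thesis using odd_card_window_iff[OF b] True unfolding L_def by auto
qed

lemma odd_card_cover_iff:
  fixes a :: nat and y z \<mu> :: int
  assumes a: "a > 0" and \<mu>: "\<mu> * \<mu> = 1"
  shows "odd (card {j. j < a \<and> (\<exists>l1 l2. l1 < a \<and> l2 < a \<and>
      2 * int a dvd y - (2 * int j + (int l1 - int l2)) \<and> 2 * int a dvd z - \<mu> * (int l1 + int l2))})
    \<longleftrightarrow> even y \<and> even z"
proof -
  define b where "b = (\<mu> * z) mod (2 * int a)"
  define L where "L = {l. l < a \<and> int l \<le> b \<and> b < int l + int a}"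
  have b: "0 \<le> b" "b < 2 * int a" using a by (simp_all add: b_def)
  have sum: "2 * int a dvd z - \<mu> * (int l1 + int l2) \<longleftrightarrow> int l1 + int l2 = b" if "l1 < a" "l2 < a" for l1 l2
    using dvd_diff_unit_mult_iff[OF \<mu>, of "int l1 + int l2" "2 * a" z] that by (simp add: b_def)
  have cover: "(\<exists>l1 l2. l1 < a \<and> l2 < a \<and>
      2 * int a dvd y - (2 * int j + (int l1 - int l2)) \<and> 2 * int a dvd z - \<mu> * (int l1 + int l2))
    \<longleftrightarrow> (\<exists>l\<in>L. 2 * int a dvd y + b - 2 * int j - 2 * int l)" for j
  proof
    assume "\<exists>l1 l2. l1 < a \<and> l2 < a \<and> 2 * int a dvd y - (2 * int j + (int l1 - int l2)) \<and>
      2 * int a dvd z - \<mu> * (int l1 + int l2)"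
    then obtain l1 l2 where l: "l1 < a" "l2 < a" "2 * int a dvd y - (2 * int j + (int l1 - int l2))"
      and "2 * int a dvd z - \<mu> * (int l1 + int l2)" by blast
    then have "int l1 + int l2 = b" using sum by blast
    then have "l1 \<in> L" "y - (2 * int j + (int l1 - int l2)) = y + b - 2 * int j - 2 * int l1"
      using l(1,2) unfolding L_def by auto
    then show "\<exists>l\<in>L. 2 * int a dvd y + b - 2 * int j - 2 * int l" using l(3) by metis
  next
    assume "\<exists>l\<in>L. 2 * int a dvd y + b - 2 * int j - 2 * int l"
    then obtain l1 where l1: "l1 \<in> L" "2 * int a dvd y + b - 2 * int j - 2 * int l1" by blast
    define l2 where "l2 = nat (b - int l1)"
    have l2: "int l2 = b - int l1" "l2 < a" "l1 < a" using l1(1) unfolding l2_def L_def by auto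
    have "y - (2 * int j + (int l1 - int l2)) = y + b - 2 * int j - 2 * int l1" using l2(1) by simp
    then have "2 * int a dvd y - (2 * int j + (int l1 - int l2))" using l1(2) by (simp only:)
    moreover have "2 * int a dvd z - \<mu> * (int l1 + int l2)" using sum[of l1 l2] l2 by simp
    ultimately show "\<exists>l1 l2. l1 < a \<and> l2 < a \<and> 2 * int a dvd y - (2 * int j + (int l1 - int l2)) \<and>
      2 * int a dvd z - \<mu> * (int l1 + int l2)"
      using l2(2,3) by blast
  qed
  have "odd \<mu>" using \<mu> by (metis dvd_mult odd_one)
  then have "even b \<longleftrightarrow> even z" by (simp add: b_def even_mod_double_iff)
  with cover show ?thesis
    using odd_card_window_cover_iff[OF a b, of y] unfolding L_def by simp
qed

section \<open>The logical operators\<close>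

lemma gal_dvd: "gal ax ay az dvd ax" "gal ax ay az dvd ay" "gal ax ay az dvd az"
  by (auto simp: gal_def intro: dvd_trans)

lemma gal_pos: "ax > 0 \<Longrightarrow> gal ax ay az > 0"
  by (simp add: gal_def)

lemma mu_square: "mu i * mu i = 1"
  by (simp add: mu_def flip: power_mult_distrib)

lemma nu_square: "nu i * nu i = 1"
  by (simp add: nu_def flip: power_mult_distrib)

lemma mem_DxL_iff:
  assumes "ax > 0" "ay > 0" "az > 0" and g: "gpt i = (gx,gy,gz)"
  shows "(x,y,z) \<in> DxL ax ay az i j \<longleftrightarrow> (x,y,z) \<in> Aset ax ay az \<and> x = gx \<and>
    (\<exists>l1 l2. l1 < gal ax ay az \<and> l2 < gal ax ay az \<and>
       2 * int (gal ax ay az) dvd (y - gy) - (2 * int j + (int l1 - int l2)) \<and>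
       2 * int (gal ax ay az) dvd (z - gz) - mu i * (int l1 + int l2))"
proof -
  let ?a = "gal ax ay az"
  let ?cy = "\<lambda>l1 l2 :: nat. gy + (2 * int j + (int l1 - int l2))"
  let ?cz = "\<lambda>l1 l2 :: nat. gz + mu i * (int l1 + int l2)"
  have pt: "padd (padd (gij i j) (padd (psc (2 * int m * int ?a) eyP) (psc (2 * int m' * int ?a) ezP)))
      (padd (psc (int l1) (padd (psc (mu i) ezP) eyP)) (psc (int l2) (padd (psc (mu i) ezP) eyM)))
    = (gx, ?cy l1 l2 + 2 * int m * int ?a, ?cz l1 l2 + 2 * int m' * int ?a)" for m m' l1 l2 :: nat
    using g by (simp add: padd_def psc_def gij_def eyP_def eyM_def ezP_def algebra_simps)
  have "DxL ax ay az i j = red ax ay az ` {(gx, ?cy l1 l2 + 2 * int m * int ?a, ?cz l1 l2 + 2 * int m' * int ?a)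
      | l1 l2 m m'. l1 < ?a \<and> l2 < ?a \<and> m < ay div ?a \<and> m' < az div ?a}"
    unfolding DxL_def Gx_def Let_def pt[symmetric] by blast
  then have "(x,y,z) \<in> DxL ax ay az i j \<longleftrightarrow> (\<exists>l1 l2. l1 < ?a \<and> l2 < ?a \<and> x = gx mod (2 * int ax) \<and>
      (\<exists>m < ay div ?a. y = (?cy l1 l2 + 2 * int m * int ?a) mod (2 * int ay)) \<and>
      (\<exists>m < az div ?a. z = (?cz l1 l2 + 2 * int m * int ?a) mod (2 * int az)))"
    by (simp add: red_def image_iff) blast
  also have "gx mod (2 * int ax) = gx" using gpt_coords[of i] g assms(1) by auto
  also have "(\<exists>l1 l2. l1 < ?a \<and> l2 < ?a \<and> x = gx \<and>
      (\<exists>m < ay div ?a. y = (?cy l1 l2 + 2 * int m * int ?a) mod (2 * int ay)) \<and>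
      (\<exists>m < az div ?a. z = (?cz l1 l2 + 2 * int m * int ?a) mod (2 * int az)))
    \<longleftrightarrow> (x,y,z) \<in> Aset ax ay az \<and> x = gx \<and>
    (\<exists>l1 l2. l1 < ?a \<and> l2 < ?a \<and> 2 * int ?a dvd y - ?cy l1 l2 \<and> 2 * int ?a dvd z - ?cz l1 l2)"
    using assms gpt_coords[of i] g by (auto simp: ex_lattice_mod_iff gal_dvd Aset_def)
  finally show ?thesis by (simp add: diff_diff_eq)
qed

lemma mem_DzL_iff:
  assumes "ax > 0" "ay > 0" "az > 0" and g: "gpt i = (gx,gy,gz)"
  shows "(x,y,z) \<in> DzL ax ay az i j \<longleftrightarrow> (x,y,z) \<in> Aset ax ay az \<and> z = gz \<and>
    (\<exists>l1 l2. l1 < gal ax ay az \<and> l2 < gal ax ay az \<and>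
       2 * int (gal ax ay az) dvd (y - gy) - (2 * int j + (int l1 - int l2)) \<and>
       2 * int (gal ax ay az) dvd (x - gx) - nu i * (int l1 + int l2))"
proof -
  let ?a = "gal ax ay az"
  let ?cx = "\<lambda>l1 l2 :: nat. gx + nu i * (int l1 + int l2)"
  let ?cy = "\<lambda>l1 l2 :: nat. gy + (2 * int j + (int l1 - int l2))"
  have pt: "padd (padd (gij i j) (padd (psc (2 * int m * int ?a) eyP) (psc (2 * int m' * int ?a) exP)))
      (padd (psc (int l1) (padd (psc (nu i) exP) eyP)) (psc (int l2) (padd (psc (nu i) exP) eyM)))
    = (?cx l1 l2 + 2 * int m' * int ?a, ?cy l1 l2 + 2 * int m * int ?a, gz)" for m m' l1 l2 :: nat
    using g by (simp add: padd_def psc_def gij_def eyP_def eyM_def exP_def algebra_simps)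
  have "DzL ax ay az i j = red ax ay az ` {(?cx l1 l2 + 2 * int m' * int ?a, ?cy l1 l2 + 2 * int m * int ?a, gz)
      | l1 l2 m' m. l1 < ?a \<and> l2 < ?a \<and> m' < ax div ?a \<and> m < ay div ?a}"
    unfolding DzL_def Gz_def Let_def pt[symmetric] by blast
  then have "(x,y,z) \<in> DzL ax ay az i j \<longleftrightarrow> (\<exists>l1 l2. l1 < ?a \<and> l2 < ?a \<and>
      (\<exists>m < ax div ?a. x = (?cx l1 l2 + 2 * int m * int ?a) mod (2 * int ax)) \<and>
      (\<exists>m < ay div ?a. y = (?cy l1 l2 + 2 * int m * int ?a) mod (2 * int ay)) \<and> z = gz mod (2 * int az))"
    by (simp add: red_def image_iff) blast
  also have "gz mod (2 * int az) = gz" using gpt_coords[of i] g assms(3) by auto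
  also have "(\<exists>l1 l2. l1 < ?a \<and> l2 < ?a \<and>
      (\<exists>m < ax div ?a. x = (?cx l1 l2 + 2 * int m * int ?a) mod (2 * int ax)) \<and>
      (\<exists>m < ay div ?a. y = (?cy l1 l2 + 2 * int m * int ?a) mod (2 * int ay)) \<and> z = gz)
    \<longleftrightarrow> (x,y,z) \<in> Aset ax ay az \<and> z = gz \<and>
    (\<exists>l1 l2. l1 < ?a \<and> l2 < ?a \<and> 2 * int ?a dvd y - ?cy l1 l2 \<and> 2 * int ?a dvd x - ?cx l1 l2)"
    using assms gpt_coords[of i] g by (auto simp: ex_lattice_mod_iff gal_dvd Aset_def)
  finally show ?thesis by (simp add: diff_diff_eq)
qed

lemma DxHalf_eq_foldr_DxL:
  assumes "ax > 0" "ay > 0" "az > 0"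
  shows "DxHalf ax ay az i = foldr (\<lambda>j. symdiff (DxL ax ay az i j)) [0..<gal ax ay az] {}"
proof (rule set_eqI)
  fix q :: pt
  obtain x y z where q: "q = (x,y,z)" by (cases q)
  obtain gx gy gz where g: "gpt i = (gx,gy,gz)" by (cases "gpt i")
  have "odd (card {j \<in> set [0..<gal ax ay az]. (x,y,z) \<in> DxL ax ay az i j}) \<longleftrightarrow>
      (x,y,z) \<in> Aset ax ay az \<and> x = gx \<and> even (y - gy) \<and> even (z - gz)"
  proof (cases "(x,y,z) \<in> Aset ax ay az \<and> x = gx")
    case True
    let ?a = "gal ax ay az"
    have J: "{j \<in> set [0..<?a]. (x,y,z) \<in> DxL ax ay az i j} = {j. j < ?a \<and> (\<exists>l1 l2. l1 < ?a \<and> l2 < ?a \<and>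
        2 * int ?a dvd (y - gy) - (2 * int j + (int l1 - int l2)) \<and>
        2 * int ?a dvd (z - gz) - mu i * (int l1 + int l2))}"
      using True by (auto simp: mem_DxL_iff[OF assms g])
    have "odd (card {j \<in> set [0..<?a]. (x,y,z) \<in> DxL ax ay az i j}) \<longleftrightarrow> even (y - gy) \<and> even (z - gz)"
      unfolding J by (rule odd_card_cover_iff[OF gal_pos[OF assms(1)] mu_square])
    then show ?thesis using True by auto
  next
    case False
    then have "{j \<in> set [0..<gal ax ay az]. (x,y,z) \<in> DxL ax ay az i j} = {}"
      by (auto simp: mem_DxL_iff[OF assms g])
    then show ?thesis using False by (simp only: card.empty) auto
  qed
  then show "q \<in> DxHalf ax ay az i \<longleftrightarrow> q \<in> foldr (\<lambda>j. symdiff (DxL ax ay az i j)) [0..<gal ax ay az] {}"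
    unfolding q mem_foldr_symdiff_iff[OF distinct_upt] mem_DxHalf_iff[OF assms g] by simp
qed

lemma DzHalf_eq_foldr_DzL:
  assumes "ax > 0" "ay > 0" "az > 0"
  shows "DzHalf ax ay az i = foldr (\<lambda>j. symdiff (DzL ax ay az i j)) [0..<gal ax ay az] {}"
proof (rule set_eqI)
  fix q :: pt
  obtain x y z where q: "q = (x,y,z)" by (cases q)
  obtain gx gy gz where g: "gpt i = (gx,gy,gz)" by (cases "gpt i")
  have "odd (card {j \<in> set [0..<gal ax ay az]. (x,y,z) \<in> DzL ax ay az i j}) \<longleftrightarrow>
      (x,y,z) \<in> Aset ax ay az \<and> z = gz \<and> even (x - gx) \<and> even (y - gy)"
  proof (cases "(x,y,z) \<in> Aset ax ay az \<and> z = gz")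
    case True
    let ?a = "gal ax ay az"
    have J: "{j \<in> set [0..<?a]. (x,y,z) \<in> DzL ax ay az i j} = {j. j < ?a \<and> (\<exists>l1 l2. l1 < ?a \<and> l2 < ?a \<and>
        2 * int ?a dvd (y - gy) - (2 * int j + (int l1 - int l2)) \<and>
        2 * int ?a dvd (x - gx) - nu i * (int l1 + int l2))}"
      using True by (auto simp: mem_DzL_iff[OF assms g])
    have "odd (card {j \<in> set [0..<?a]. (x,y,z) \<in> DzL ax ay az i j}) \<longleftrightarrow> even (y - gy) \<and> even (x - gx)"
      unfolding J by (rule odd_card_cover_iff[OF gal_pos[OF assms(1)] nu_square])
    then show ?thesis using True by auto
  next
    case False
    then have "{j \<in> set [0..<gal ax ay az]. (x,y,z) \<in> DzL ax ay az i j} = {}"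
      by (auto simp: mem_DzL_iff[OF assms g])
    then show ?thesis using False by (simp only: card.empty) auto
  qed
  then show "q \<in> DzHalf ax ay az i \<longleftrightarrow> q \<in> foldr (\<lambda>j. symdiff (DzL ax ay az i j)) [0..<gal ax ay az] {}"
    unfolding q mem_foldr_symdiff_iff[OF distinct_upt] mem_DzHalf_iff[OF assms g] by simp
qed

(* With these definitions the two sides agree exactly, so the stabilizer factor is the identity. *)
theorem corollary3:
  fixes ax ay az \<alpha> :: nat
  assumes "ax > 1" and "ay > 1" and "az > 1"
    and "\<alpha> = gcd (gcd ax ay) az"
    and "odd (ay div \<alpha>)"
  shows "\<forall>i < 4.
     (\<forall>s \<in> Aset ax ay az - Dset ax ay az.
         pcommute (Xres (DxHalf ax ay az i)) (Sgen ax ay az s)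
       \<and> pcommute (Zres (DzHalf ax ay az i)) (Sgen ax ay az s))
   \<and> (\<exists>S \<in> stab ax ay az.
         Xres (DxHalf ax ay az i) = pmult (pprod (map (\<lambda>j. XL ax ay az i j) [0..<\<alpha>])) S)
   \<and> (\<exists>S \<in> stab ax ay az.
         Zres (DzHalf ax ay az i) = pmult (pprod (map (\<lambda>j. ZL ax ay az i j) [0..<\<alpha>])) S)"
proof (intro allI impI conjI ballI)
  fix i s
  have pos: "ax > 0" "ay > 0" "az > 0" using assms(1-3) by simp_all
  have \<alpha>: "gal ax ay az = \<alpha>" using assms(4) by (simp add: gal_def)
  show "pcommute (Xres (DxHalf ax ay az i)) (Sgen ax ay az s)"
    by (rule pcommute_DxHalf_Sgen[OF pos])
  show "pcommute (Zres (DzHalf ax ay az i)) (Sgen ax ay az s)"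
    by (rule pcommute_DzHalf_Sgen[OF pos])
  have "Xres (DxHalf ax ay az i) = pmult (pprod (map (\<lambda>j. XL ax ay az i j) [0..<\<alpha>])) pone"
    unfolding XL_def pprod_map_Xres pmult_Xres_pone DxHalf_eq_foldr_DxL[OF pos] \<alpha> ..
  then show "\<exists>S \<in> stab ax ay az.
      Xres (DxHalf ax ay az i) = pmult (pprod (map (\<lambda>j. XL ax ay az i j) [0..<\<alpha>])) S"
    using stab.stab_one by blast
  have "Zres (DzHalf ax ay az i) = pmult (pprod (map (\<lambda>j. ZL ax ay az i j) [0..<\<alpha>])) pone"
    unfolding ZL_def pprod_map_Zres pmult_Zres_pone DzHalf_eq_foldr_DzL[OF pos] \<alpha> ..
  then show "\<exists>S \<in> stab ax ay az.
      Zres (DzHalf ax ay az i) = pmult (pprod (map (\<lambda>j. ZL ax ay az i j) [0..<\<alpha>])) S"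
    using stab.stab_one by blast
qed

end
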